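(* For every positive integer $m$, $\lim_{\theta\to0^+}L_{m+1}(\theta)\ge\lim_{\theta\to0^+}L_m(\theta)$.
   Context: $\lg$ denotes $\log_2$. For a positive integer $m$ and $0<\theta<1$, $$L_m(\theta)=\begin{cases}1+\lg m+\dfrac{\theta^{m/2}}{1-\theta^{m/2}}, & m=2^\beta \text{ for some integer } \beta\ge0,\\[2mm] 1+\lfloor\lg m\rfloor+\dfrac{\theta^{(2^{\lceil\lg m\rceil}-m)/2}}{1-\theta^{m/2}}, & \text{otherwise.}\end{cases}$$ *)

theory Defs
  imports "HOL-Analysis.Analysis"
begin

definition L :: "nat \<Rightarrow> real \<Rightarrow> real" where
  "L m \<theta> =
     (if \<exists>\<beta>::nat. m = 2 ^ \<beta>
      then 1 + log 2 (real m) + \<theta> powr (real m / 2) / (1 - \<theta> powr (real m / 2))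
      else 1 + real_of_int \<lfloor>log 2 (real m)\<rfloor>
             + \<theta> powr ((2 ^ nat \<lceil>log 2 (real m)\<rceil> - real m) / 2)
               / (1 - \<theta> powr (real m / 2)))"

end

theory Submission
  imports Defs
begin

text \<open>Both exponents in the correction term of \<open>L m\<close> are positive (for \<open>m\<close> not a power of two
  because \<open>m < 2\<^bsup>\<lceil>lg m\<rceil>\<^esup>\<close>), so the correction vanishes as \<open>\<theta> \<to> 0\<^sup>+\<close> and
  \<open>L m\<close> tends to \<open>1 + \<lfloor>lg m\<rfloor>\<close>, which is monotone in \<open>m\<close>.\<close>

lemma tendsto_powr_at_right_0:
  fixes c :: real
  assumes "c > 0"
  shows "((\<lambda>t. t powr c) \<longlongrightarrow> 0) (at_right 0)"
  using assms
  by (intro tendsto_zero_powrI tendsto_ident_at)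
     (auto intro: eventually_mono[OF eventually_at_right_less])

lemma tendsto_powr_quotient_at_right_0:
  fixes c d :: real
  assumes "c > 0" and "d > 0"
  shows "((\<lambda>t. t powr c / (1 - t powr d)) \<longlongrightarrow> 0) (at_right 0)"
  using tendsto_divide[OF tendsto_powr_at_right_0[OF assms(1)]
                          tendsto_diff[OF tendsto_const tendsto_powr_at_right_0[OF assms(2)]]]
  by simp

lemma less_two_power_ceiling_log:
  fixes m :: nat
  assumes "m \<ge> 1" and "\<nexists>\<beta>::nat. m = 2 ^ \<beta>"
  shows "real m < 2 ^ nat \<lceil>log 2 (real m)\<rceil>"
proof -
  define k where "k = nat \<lceil>log 2 (real m)\<rceil>"
  have "real m = 2 powr log 2 (real m)"
    using assms(1) by simp
  also have "\<dots> \<le> 2 powr real k"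
    unfolding k_def using assms(1) by (intro powr_mono) auto
  also have "\<dots> = 2 ^ k"
    by (simp add: powr_realpow)
  finally have "real m \<le> 2 ^ k" .
  moreover have "real m \<noteq> 2 ^ k"
    using assms(2) by (metis of_nat_eq_iff of_nat_numeral of_nat_power)
  ultimately show ?thesis
    unfolding k_def by simp
qed

lemma L_tendsto_floor_log:
  assumes "m \<ge> 1"
  shows "(L m \<longlongrightarrow> 1 + real_of_int \<lfloor>log 2 (real m)\<rfloor>) (at_right 0)"
proof (cases "\<exists>\<beta>::nat. m = 2 ^ \<beta>")
  case True
  then obtain \<beta> :: nat where "m = 2 ^ \<beta>"
    by blast
  then have log_m: "log 2 (real m) = real \<beta>"
    by (simp add: log_nat_power)
  have "((\<lambda>t. 1 + log 2 (real m) + t powr (real m / 2) / (1 - t powr (real m / 2)))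
          \<longlongrightarrow> 1 + log 2 (real m) + 0) (at_right 0)"
    using assms by (intro tendsto_intros tendsto_powr_quotient_at_right_0) auto
  moreover have "L m = (\<lambda>t. 1 + log 2 (real m) + t powr (real m / 2) / (1 - t powr (real m / 2)))"
    using True by (simp add: L_def fun_eq_iff)
  ultimately show ?thesis
    using log_m by simp
next
  case False
  define k where "k = nat \<lceil>log 2 (real m)\<rceil>"
  have "(2 ^ k - real m) / 2 > 0"
    using less_two_power_ceiling_log[OF assms False] unfolding k_def by simp
  then have "((\<lambda>t. 1 + real_of_int \<lfloor>log 2 (real m)\<rfloor>
                   + t powr ((2 ^ k - real m) / 2) / (1 - t powr (real m / 2)))
               \<longlongrightarrow> 1 + real_of_int \<lfloor>log 2 (real m)\<rfloor> + 0) (at_right 0)"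
    using assms by (intro tendsto_intros tendsto_powr_quotient_at_right_0) auto
  moreover have "L m = (\<lambda>t. 1 + real_of_int \<lfloor>log 2 (real m)\<rfloor>
                              + t powr ((2 ^ k - real m) / 2) / (1 - t powr (real m / 2)))"
    using False by (simp add: L_def fun_eq_iff k_def)
  ultimately show ?thesis
    by simp
qed

theorem lemma5:
  fixes m :: nat
  assumes "m \<ge> 1"
  shows "\<exists>a b. (L m \<longlongrightarrow> a) (at_right 0) \<and> (L (m + 1) \<longlongrightarrow> b) (at_right 0) \<and> a \<le> b"
proof (intro exI conjI)
  show "(L m \<longlongrightarrow> 1 + real_of_int \<lfloor>log 2 (real m)\<rfloor>) (at_right 0)"
    using L_tendsto_floor_log[OF assms] .
  show "(L (m + 1) \<longlongrightarrow> 1 + real_of_int \<lfloor>log 2 (real (m + 1))\<rfloor>) (at_right 0)"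
    using L_tendsto_floor_log[of "m + 1"] by simp
  have "log 2 (real m) \<le> log 2 (real (m + 1))"
    using assms by simp
  then show "1 + real_of_int \<lfloor>log 2 (real m)\<rfloor> \<le> 1 + real_of_int \<lfloor>log 2 (real (m + 1))\<rfloor>"
    by (simp add: floor_mono)
qed

end
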